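(* For the system of $N$ symplectic point vortices in $\mathbb R^{2m}$ (the Hamiltonian system on $(\mathbb R^{2m})^N$ with Poisson bracket $\{f,g\}=\sum_{j=1}^N\frac1{\Gamma_j}\sum_{\alpha=1}^m\big(\frac{\partial f}{\partial x_{j,\alpha}}\frac{\partial g}{\partial y_{j,\alpha}}-\frac{\partial f}{\partial y_{j,\alpha}}\frac{\partial g}{\partial x_{j,\alpha}}\big)$ and Hamiltonian $\mathcal H=2C(2m)\sum_{j<k}\Gamma_j\Gamma_k|\tilde z_j-\tilde z_k|^{2-2m}$ for $m>1$, resp. $\mathcal H=-\frac1{4\pi}\sum_{j<k}\Gamma_j\Gamma_k\ln|\tilde z_j-\tilde z_k|^2$ for $m=1$), the functions $$\mathcal H,\qquad F^+_{\alpha\alpha}=\sum_{j=1}^N\Gamma_j(x_{j,\alpha}^2+y_{j,\alpha}^2),\qquad Q_\alpha^2+P_\alpha^2\quad(1\le\alpha\le m),$$ where $Q_\alpha=\sum_{j}\Gamma_jx_{j,\alpha}$ and $P_\alpha=\sum_j\Gamma_jy_{j,\alpha}$, provide $2m+1$ first integrals in involution on $(\mathbb R^{2m})^N$.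
   Context: $\tilde z_j=(x_{j,1},\dots,x_{j,m},y_{j,1},\dots,y_{j,m})\in\mathbb R^{2m}$ is the position of the $j$-th vortex, $\Gamma_j\neq0$ are real vortex strengths, $|\cdot|$ is the Euclidean norm, and $C(2m)$ is the constant with $\Delta(C(2m)|\tilde z|^{2-2m})=\delta$ in $\mathbb R^{2m}$. The equations of motion are $\Gamma_j\dot x_{j,\alpha}=\partial\mathcal H/\partial y_{j,\alpha}$, $\Gamma_j\dot y_{j,\alpha}=-\partial\mathcal H/\partial x_{j,\alpha}$. "In involution" means pairwise Poisson commuting. *)

theory Defs
  imports "HOL-Analysis.Analysis"
begin

text \<open>Phase space (R^{2m})^N: a configuration z assigns to each vortex j (index type 'n,
  N = CARD('n)) and each alpha (index type 'm, m = CARD('m)) the pair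
  (x_{j,alpha}, y_{j,alpha}).  Then z$j is the position of vortex j in R^{2m},
  and norm (z$j) is its Euclidean norm.\<close>

type_synonym ('m, 'n) phase = "((real \<times> real) ^ 'm) ^ 'n"

definition xco :: "('m::finite, 'n::finite) phase \<Rightarrow> 'n \<Rightarrow> 'm \<Rightarrow> real" where
  "xco z j a = fst (z $ j $ a)"

definition yco :: "('m::finite, 'n::finite) phase \<Rightarrow> 'n \<Rightarrow> 'm \<Rightarrow> real" where
  "yco z j a = snd (z $ j $ a)"

definition ex :: "'n \<Rightarrow> 'm \<Rightarrow> ('m::finite, 'n::finite) phase" where
  "ex j a = (\<chi> k. \<chi> b. if k = j \<and> b = a then (1, 0) else (0, 0))"

definition ey :: "'n \<Rightarrow> 'm \<Rightarrow> ('m::finite, 'n::finite) phase" where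
  "ey j a = (\<chi> k. \<chi> b. if k = j \<and> b = a then (0, 1) else (0, 0))"

definition dx :: "(('m::finite, 'n::finite) phase \<Rightarrow> real) \<Rightarrow> ('m, 'n) phase \<Rightarrow> 'n \<Rightarrow> 'm \<Rightarrow> real" where
  "dx f z j a = deriv (\<lambda>t. f (z + t *\<^sub>R ex j a)) 0"

definition dy :: "(('m::finite, 'n::finite) phase \<Rightarrow> real) \<Rightarrow> ('m, 'n) phase \<Rightarrow> 'n \<Rightarrow> 'm \<Rightarrow> real" where
  "dy f z j a = deriv (\<lambda>t. f (z + t *\<^sub>R ey j a)) 0"

definition pbracket :: "('n \<Rightarrow> real) \<Rightarrow> (('m::finite, 'n::finite) phase \<Rightarrow> real)
    \<Rightarrow> (('m, 'n) phase \<Rightarrow> real) \<Rightarrow> ('m, 'n) phase \<Rightarrow> real" where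
  "pbracket \<Gamma> f g z = (\<Sum>j\<in>UNIV. (1 / \<Gamma> j) *
      (\<Sum>a\<in>UNIV. dx f z j a * dy g z j a - dy f z j a * dx g z j a))"

text \<open>C(n): the constant with Laplacian (C(n) |z|^{2-n}) = delta in R^n, n = 2m, m > 1:
  C(n) = -1/((n-2) |S^{n-1}|), |S^{2m-1}| = 2 pi^m/(m-1)!, so C(2m) = -(m-2)!/(4 pi^m).\<close>
definition Cconst :: "nat \<Rightarrow> real" where
  "Cconst m = - fact (m - 2) / (4 * pi ^ m)"

definition noncoll :: "('m::finite, 'n::finite) phase set" where
  "noncoll = {z. \<forall>j k. j \<noteq> k \<longrightarrow> z $ j \<noteq> z $ k}"

text \<open>Hamiltonian; the sum over j<k is written as half the sum over ordered pairs j \<noteq> k.\<close>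
definition ham :: "('n \<Rightarrow> real) \<Rightarrow> ('m::finite, 'n::finite) phase \<Rightarrow> real" where
  "ham \<Gamma> z = (if CARD('m) = 1 then
      - (1 / (4 * pi)) * ((1/2) * (\<Sum>(j,k)\<in>{(j,k). j \<noteq> k}.
            \<Gamma> j * \<Gamma> k * ln ((norm (z $ j - z $ k))\<^sup>2)))
    else 2 * Cconst CARD('m) * ((1/2) * (\<Sum>(j,k)\<in>{(j,k). j \<noteq> k}.
            \<Gamma> j * \<Gamma> k * norm (z $ j - z $ k) powr (2 - 2 * real CARD('m)))))"

definition Fplus :: "('n \<Rightarrow> real) \<Rightarrow> 'm \<Rightarrow> ('m::finite, 'n::finite) phase \<Rightarrow> real" where
  "Fplus \<Gamma> a z = (\<Sum>j\<in>UNIV. \<Gamma> j * ((xco z j a)\<^sup>2 + (yco z j a)\<^sup>2))"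

definition Qc :: "('n \<Rightarrow> real) \<Rightarrow> 'm \<Rightarrow> ('m::finite, 'n::finite) phase \<Rightarrow> real" where
  "Qc \<Gamma> a z = (\<Sum>j\<in>UNIV. \<Gamma> j * xco z j a)"

definition Pc :: "('n \<Rightarrow> real) \<Rightarrow> 'm \<Rightarrow> ('m::finite, 'n::finite) phase \<Rightarrow> real" where
  "Pc \<Gamma> a z = (\<Sum>j\<in>UNIV. \<Gamma> j * yco z j a)"

definition QPsq :: "('n \<Rightarrow> real) \<Rightarrow> 'm \<Rightarrow> ('m::finite, 'n::finite) phase \<Rightarrow> real" where
  "QPsq \<Gamma> a z = (Qc \<Gamma> a z)\<^sup>2 + (Pc \<Gamma> a z)\<^sup>2"

end

theory Submission
  imports Defs
begin

text \<open>
  The Poisson bracket {f, g} is the derivative of f along the Hamiltonian vector field of g.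
  The Hamiltonian vector field of F+_b rotates every vortex in its b-th coordinate plane, and
  that of Q_b^2 + P_b^2 translates all vortices in that plane by the common vector (2 P_b, -2 Q_b).
  Both are infinitesimal rigid motions of the configuration, so they do not change the mutual
  distances and hence not the Hamiltonian; a direct computation shows that they also leave every
  F+_c and Q_c^2 + P_c^2 invariant. The remaining bracket of the Hamiltonian with itself vanishes
  by antisymmetry.
\<close>

lemma deriv_along_line:
  fixes f :: "'a::real_normed_vector \<Rightarrow> real"
  assumes "(f has_derivative D) (at z)"
  shows "deriv (\<lambda>t. f (z + t *\<^sub>R v)) 0 = D v"
proof -
  have "((\<lambda>t. z + t *\<^sub>R v) has_derivative (\<lambda>t. t *\<^sub>R v)) (at 0)"
    by (auto intro!: derivative_eq_intros)
  from has_derivative_compose[OF this, of f D] assms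
  have "((\<lambda>t. f (z + t *\<^sub>R v)) has_derivative (\<lambda>t. D (t *\<^sub>R v))) (at 0)"
    by (simp add: o_def)
  moreover have "(\<lambda>t. D (t *\<^sub>R v)) = (\<lambda>t. D v * t)"
    using linear_cmul[OF has_derivative_linear[OF assms]] by (auto simp: mult.commute)
  ultimately show ?thesis
    by (intro DERIV_imp_deriv) (simp add: has_field_derivative_def)
qed

lemma xco_ex [simp]: "xco (ex j a) k b = (if k = j \<and> b = a then 1 else 0)"
  by (simp add: xco_def ex_def)
lemma yco_ex [simp]: "yco (ex j a) k b = 0"
  by (simp add: yco_def ex_def)
lemma xco_ey [simp]: "xco (ey j a) k b = 0"
  by (simp add: xco_def ey_def)
lemma yco_ey [simp]: "yco (ey j a) k b = (if k = j \<and> b = a then 1 else 0)"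
  by (simp add: yco_def ey_def)

lemma sum_sum_delta:
  fixes f :: "'a::finite \<Rightarrow> 'b::finite \<Rightarrow> 'c::comm_monoid_add"
  shows "(\<Sum>x\<in>UNIV. \<Sum>y\<in>UNIV. if i = x \<and> k = y then f x y else 0) = f i k"
proof -
  have "(\<Sum>y\<in>UNIV. if i = x \<and> k = y then f x y else 0) = (if i = x then f x k else 0)" for x
    by (cases "i = x") simp_all
  then show ?thesis by simp
qed

lemma phase_eq_sum_basis:
  fixes v :: "('m::finite, 'n::finite) phase"
  shows "v = (\<Sum>j\<in>UNIV. \<Sum>a\<in>UNIV. xco v j a *\<^sub>R ex j a + yco v j a *\<^sub>R ey j a)"
  by (simp add: vec_eq_iff prod_eq_iff fst_sum snd_sum xco_def yco_def ex_def ey_def if_distrib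
      sum_sum_delta cong: if_cong)

lemma linear_phase_expansion:
  fixes D :: "('m::finite, 'n::finite) phase \<Rightarrow> real"
  assumes "linear D"
  shows "D v = (\<Sum>j\<in>UNIV. \<Sum>a\<in>UNIV. xco v j a * D (ex j a) + yco v j a * D (ey j a))"
  by (subst phase_eq_sum_basis)
    (simp add: linear_sum[OF assms] linear_add[OF assms] linear_cmul[OF assms])

text \<open>Since x / 0 = 0, the bracket identity below holds without any hypothesis on \<Gamma>.\<close>

definition sgrad :: "('n \<Rightarrow> real) \<Rightarrow> (('m::finite, 'n::finite) phase \<Rightarrow> real) \<Rightarrow> ('m, 'n) phase" where
  "sgrad \<Gamma> D = (\<chi> j a. (D (ey j a) / \<Gamma> j, - D (ex j a) / \<Gamma> j))"

lemma xco_sgrad [simp]: "xco (sgrad \<Gamma> D) j a = D (ey j a) / \<Gamma> j"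
  by (simp add: xco_def sgrad_def)
lemma yco_sgrad [simp]: "yco (sgrad \<Gamma> D) j a = - D (ex j a) / \<Gamma> j"
  by (simp add: yco_def sgrad_def)

lemma pbracket_eq_deriv_sgrad:
  assumes "(f has_derivative Df) (at z)" and "(g has_derivative Dg) (at z)"
  shows "pbracket \<Gamma> f g z = Df (sgrad \<Gamma> Dg)"
  unfolding pbracket_def dx_def dy_def deriv_along_line[OF assms(1)] deriv_along_line[OF assms(2)]
    linear_phase_expansion[OF has_derivative_linear[OF assms(1)], of "sgrad \<Gamma> Dg"]
  by (simp add: sum_distrib_left sum_subtractf algebra_simps)

lemma pbracket_antisym: "pbracket \<Gamma> f g z = - pbracket \<Gamma> g f z"
  unfolding pbracket_def
  by (simp add: sum_negf[symmetric] sum_subtractf mult.commute minus_divide_left)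

definition DFplus :: "('n \<Rightarrow> real) \<Rightarrow> 'm \<Rightarrow> ('m::finite, 'n::finite) phase \<Rightarrow> ('m, 'n) phase \<Rightarrow> real" where
  "DFplus \<Gamma> b z v = 2 * (\<Sum>j\<in>UNIV. \<Gamma> j * (xco z j b * xco v j b + yco z j b * yco v j b))"

definition DQPsq :: "('n \<Rightarrow> real) \<Rightarrow> 'm \<Rightarrow> ('m::finite, 'n::finite) phase \<Rightarrow> ('m, 'n) phase \<Rightarrow> real" where
  "DQPsq \<Gamma> b z v = 2 * (Qc \<Gamma> b z * Qc \<Gamma> b v + Pc \<Gamma> b z * Pc \<Gamma> b v)"

lemma has_derivative_vec_nth [derivative_intros]:
  "(f has_derivative f') F \<Longrightarrow> ((\<lambda>x. f x $ i) has_derivative (\<lambda>h. f' h $ i)) F"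
  using bounded_linear.has_derivative[OF bounded_linear_vec_nth] by blast

lemma Fplus_has_derivative: "(Fplus \<Gamma> b has_derivative DFplus \<Gamma> b z) (at z)"
  unfolding Fplus_def[abs_def] DFplus_def[abs_def] xco_def yco_def
  by (auto intro!: derivative_eq_intros simp: algebra_simps sum_distrib_left)

lemma Qc_has_derivative: "(Qc \<Gamma> b has_derivative Qc \<Gamma> b) (at z)"
  unfolding Qc_def[abs_def] xco_def by (auto intro!: derivative_eq_intros)

lemma Pc_has_derivative: "(Pc \<Gamma> b has_derivative Pc \<Gamma> b) (at z)"
  unfolding Pc_def[abs_def] yco_def by (auto intro!: derivative_eq_intros)

lemma QPsq_has_derivative: "(QPsq \<Gamma> b has_derivative DQPsq \<Gamma> b z) (at z)"
  unfolding QPsq_def[abs_def] DQPsq_def[abs_def]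
  by (auto intro!: derivative_eq_intros Qc_has_derivative Pc_has_derivative simp: algebra_simps)

definition rot_field :: "'m \<Rightarrow> ('m::finite, 'n::finite) phase \<Rightarrow> ('m, 'n) phase" where
  "rot_field b z = (\<chi> k a. if a = b then (2 * yco z k b, - 2 * xco z k b) else 0)"

definition transl_field :: "('n \<Rightarrow> real) \<Rightarrow> 'm \<Rightarrow> ('m::finite, 'n::finite) phase \<Rightarrow> ('m, 'n) phase" where
  "transl_field \<Gamma> b z = (\<chi> k a. if a = b then (2 * Pc \<Gamma> b z, - 2 * Qc \<Gamma> b z) else 0)"

lemma sgrad_DFplus:
  assumes "\<And>j. \<Gamma> j \<noteq> 0"
  shows "sgrad \<Gamma> (DFplus \<Gamma> b z) = rot_field b z"
  using assms
  by (auto simp: sgrad_def rot_field_def DFplus_def vec_eq_iff if_distrib[of "\<lambda>x. _ * x"]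
      if_distrib[of "\<lambda>x. _ * (_ * x)"] sum.delta zero_prod_def cong: if_cong)

lemma sgrad_DQPsq:
  assumes "\<And>j. \<Gamma> j \<noteq> 0"
  shows "sgrad \<Gamma> (DQPsq \<Gamma> b z) = transl_field \<Gamma> b z"
  using assms
  by (auto simp: sgrad_def transl_field_def DQPsq_def Qc_def Pc_def vec_eq_iff
      if_distrib[of "\<lambda>x. _ * x"] sum.delta zero_prod_def cong: if_cong)

lemma xco_rot_field [simp]: "xco (rot_field b z) k a = (if a = b then 2 * yco z k b else 0)"
  by (simp add: rot_field_def xco_def)

lemma yco_rot_field [simp]: "yco (rot_field b z) k a = (if a = b then - 2 * xco z k b else 0)"
  by (simp add: rot_field_def yco_def)

lemma xco_transl_field [simp]: "xco (transl_field \<Gamma> b z) k a = (if a = b then 2 * Pc \<Gamma> b z else 0)"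
  by (simp add: transl_field_def xco_def)

lemma yco_transl_field [simp]: "yco (transl_field \<Gamma> b z) k a = (if a = b then - 2 * Qc \<Gamma> b z else 0)"
  by (simp add: transl_field_def yco_def)

lemma DFplus_rot_field: "DFplus \<Gamma> c z (rot_field b z) = 0"
  by (cases "c = b") (simp_all add: DFplus_def algebra_simps)

lemma DFplus_transl_field: "DFplus \<Gamma> c z (transl_field \<Gamma> b z) = 0"
proof (cases "c = b")
  case True
  have "DFplus \<Gamma> b z (transl_field \<Gamma> b z)
      = 4 * (Pc \<Gamma> b z * (\<Sum>j\<in>UNIV. \<Gamma> j * xco z j b) - Qc \<Gamma> b z * (\<Sum>j\<in>UNIV. \<Gamma> j * yco z j b))"
    by (simp add: DFplus_def sum_distrib_left sum_subtractf[symmetric] algebra_simps)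
  also have "\<dots> = 0" by (simp add: Qc_def Pc_def)
  finally show ?thesis using True by simp
qed (simp add: DFplus_def)

lemma Qc_rot_field: "Qc \<Gamma> c (rot_field b z) = (if c = b then 2 * Pc \<Gamma> b z else 0)"
  by (simp add: Qc_def Pc_def sum_distrib_left algebra_simps)

lemma Pc_rot_field: "Pc \<Gamma> c (rot_field b z) = (if c = b then - 2 * Qc \<Gamma> b z else 0)"
  by (simp add: Qc_def Pc_def sum_distrib_left algebra_simps sum_negf)

lemma Qc_transl_field:
  "Qc \<Gamma> c (transl_field \<Gamma> b z) = (if c = b then 2 * Pc \<Gamma> b z * sum \<Gamma> UNIV else 0)"
  by (simp add: Qc_def sum_distrib_left sum_distrib_right algebra_simps)

lemma Pc_transl_field:
  "Pc \<Gamma> c (transl_field \<Gamma> b z) = (if c = b then - 2 * Qc \<Gamma> b z * sum \<Gamma> UNIV else 0)"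
  by (simp add: Pc_def sum_distrib_left sum_distrib_right algebra_simps sum_negf)

lemma DQPsq_rot_field: "DQPsq \<Gamma> c z (rot_field b z) = 0"
  by (simp add: DQPsq_def Qc_rot_field Pc_rot_field)

lemma DQPsq_transl_field: "DQPsq \<Gamma> c z (transl_field \<Gamma> b z) = 0"
  by (simp add: DQPsq_def Qc_transl_field Pc_transl_field)

definition infinitesimal_isometry :: "('a::real_inner) ^ 'n \<Rightarrow> 'a ^ 'n \<Rightarrow> bool" where
  "infinitesimal_isometry z v \<longleftrightarrow> (\<forall>j k. inner (v $ j - v $ k) (z $ j - z $ k) = 0)"

lemma inner_phase_coords:
  fixes u w :: "(real \<times> real) ^ 'm::finite"
  shows "inner u w = (\<Sum>a\<in>UNIV. fst (u $ a) * fst (w $ a) + snd (u $ a) * snd (w $ a))"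
  by (simp add: inner_vec_def inner_prod_def)

lemma infinitesimal_isometry_rot_field: "infinitesimal_isometry z (rot_field b z)"
proof -
  have "inner (rot_field b z $ j - rot_field b z $ k) (z $ j - z $ k) = 0" for j k
    using xco_rot_field[of b z] yco_rot_field[of b z] unfolding inner_phase_coords
    by (intro sum.neutral) (auto simp: xco_def yco_def algebra_simps)
  then show ?thesis by (simp add: infinitesimal_isometry_def)
qed

lemma infinitesimal_isometry_transl_field: "infinitesimal_isometry z (transl_field \<Gamma> b z)"
  by (simp add: infinitesimal_isometry_def transl_field_def vec_eq_iff)

lemma has_derivative_dist_pair:
  fixes z :: "('a::real_inner) ^ 'n"
  assumes "z $ j \<noteq> z $ k"
  shows "((\<lambda>w. norm (w $ j - w $ k)) has_derivative (\<lambda>v. inner (v $ j - v $ k) (sgn (z $ j - z $ k)))) (at z)"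
proof -
  have "((\<lambda>w. w $ j - w $ k) has_derivative (\<lambda>v. v $ j - v $ k)) (at z)"
    by (auto intro!: derivative_eq_intros)
  moreover have "(norm has_derivative (\<lambda>h. inner h (sgn (z $ j - z $ k)))) (at (z $ j - z $ k))"
    using has_derivative_norm[of "z $ j - z $ k"] assms by simp
  ultimately show ?thesis
    using has_derivative_compose by (fastforce simp: o_def)
qed

lemma pair_potential_has_derivative:
  fixes z :: "('a::real_inner) ^ 'n::finite"
  assumes "\<And>j k. j \<noteq> k \<Longrightarrow> z $ j \<noteq> z $ k"
    and "\<And>r. r > 0 \<Longrightarrow> (\<phi> has_real_derivative \<phi>' r) (at r)"
  shows "((\<lambda>w. \<Sum>(j, k)\<in>{(j, k). j \<noteq> k}. c j k * \<phi> (norm (w $ j - w $ k))) has_derivative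
      (\<lambda>v. \<Sum>(j, k)\<in>{(j, k). j \<noteq> k}.
          c j k * (inner (v $ j - v $ k) (sgn (z $ j - z $ k)) * \<phi>' (norm (z $ j - z $ k))))) (at z)"
proof -
  have "((\<lambda>w. c j k * \<phi> (norm (w $ j - w $ k))) has_derivative
      (\<lambda>v. c j k * (inner (v $ j - v $ k) (sgn (z $ j - z $ k)) * \<phi>' (norm (z $ j - z $ k))))) (at z)"
    if "j \<noteq> k" for j k
    using assms that
    by (intro has_derivative_mult_right DERIV_compose_FDERIV has_derivative_dist_pair) auto
  then show ?thesis
    unfolding split_def by (intro has_derivative_sum) auto
qed

lemma ham_has_derivative_invariant:
  fixes \<Gamma> :: "'n::finite \<Rightarrow> real" and z :: "('m::finite, 'n) phase"
  assumes "z \<in> noncoll"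
  obtains D where "(ham \<Gamma> has_derivative D) (at z)" "\<And>v. infinitesimal_isometry z v \<Longrightarrow> D v = 0"
proof -
  obtain K \<phi> \<phi>' where ham: "ham \<Gamma> = (\<lambda>w :: ('m, 'n) phase. K * ((1/2) *
        (\<Sum>(j, k)\<in>{(j, k). j \<noteq> k}. \<Gamma> j * \<Gamma> k * \<phi> (norm (w $ j - w $ k)))))"
      and \<phi>: "\<And>r. r > 0 \<Longrightarrow> (\<phi> has_real_derivative \<phi>' r) (at r)"
  proof (cases "CARD('m) = 1")
    case True
    have "((\<lambda>r. ln (r\<^sup>2)) has_real_derivative 2 / r) (at r)" if "r > 0" for r :: real
      using that by (auto intro!: derivative_eq_intros simp: field_simps power2_eq_square)
    with True show ?thesis
      by (intro that[of "- (1 / (4 * pi))" "\<lambda>r. ln (r\<^sup>2)"]) (simp_all add: ham_def[abs_def])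
  next
    case False
    have "((\<lambda>r. r powr (2 - 2 * real CARD('m))) has_real_derivative
        (2 - 2 * real CARD('m)) * r powr (2 - 2 * real CARD('m) - 1)) (at r)" if "r > 0" for r
      by (rule has_real_derivative_powr[OF that])
    with False show ?thesis
      by (intro that[of "2 * Cconst CARD('m)" "\<lambda>r. r powr (2 - 2 * real CARD('m))"])
        (simp_all add: ham_def[abs_def])
  qed
  have "z $ j \<noteq> z $ k" if "j \<noteq> k" for j k using assms that by (simp add: noncoll_def)
  from pair_potential_has_derivative[of z, OF this \<phi>, of "\<lambda>j k. \<Gamma> j * \<Gamma> k"]
  have "(ham \<Gamma> has_derivative (\<lambda>v. K * ((1/2) * (\<Sum>(j, k)\<in>{(j, k). j \<noteq> k}. \<Gamma> j * \<Gamma> k *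
      (inner (v $ j - v $ k) (sgn (z $ j - z $ k)) * \<phi>' (norm (z $ j - z $ k))))))) (at z)"
    unfolding ham by (intro has_derivative_mult_right)
  then show ?thesis
    by (rule that) (simp add: infinitesimal_isometry_def sgn_div_norm)
qed

lemma first_integral_derivative_invariant:
  fixes z :: "('m::finite, 'n::finite) phase"
  assumes "h \<in> {ham \<Gamma>} \<union> range (Fplus \<Gamma>) \<union> range (QPsq \<Gamma>)" and "z \<in> noncoll"
  obtains D where "(h has_derivative D) (at z)"
    and "\<And>b. D (rot_field b z) = 0" and "\<And>b. D (transl_field \<Gamma> b z) = 0"
proof -
  consider "h = ham \<Gamma>" | c where "h = Fplus \<Gamma> c" | c where "h = QPsq \<Gamma> c"
    using assms(1) by blast
  then show ?thesis
  proof cases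
    case 1
    then show ?thesis
      using ham_has_derivative_invariant[OF assms(2)] that
        infinitesimal_isometry_rot_field infinitesimal_isometry_transl_field by metis
  next
    case (2 c)
    show ?thesis
      by (rule that[of "DFplus \<Gamma> c z"])
        (simp_all add: 2 Fplus_has_derivative DFplus_rot_field DFplus_transl_field)
  next
    case (3 c)
    show ?thesis
      by (rule that[of "DQPsq \<Gamma> c z"])
        (simp_all add: 3 QPsq_has_derivative DQPsq_rot_field DQPsq_transl_field)
  qed
qed

lemma pbracket_Fplus:
  assumes "\<And>j. \<Gamma> j \<noteq> 0" and "(f has_derivative Df) (at z)"
  shows "pbracket \<Gamma> f (Fplus \<Gamma> b) z = Df (rot_field b z)"
  by (simp add: pbracket_eq_deriv_sgrad[OF assms(2) Fplus_has_derivative] sgrad_DFplus assms(1))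

lemma pbracket_QPsq:
  assumes "\<And>j. \<Gamma> j \<noteq> 0" and "(f has_derivative Df) (at z)"
  shows "pbracket \<Gamma> f (QPsq \<Gamma> b) z = Df (transl_field \<Gamma> b z)"
  by (simp add: pbracket_eq_deriv_sgrad[OF assms(2) QPsq_has_derivative] sgrad_DQPsq assms(1))

theorem corollary4p4:
  fixes \<Gamma> :: "'n::finite \<Rightarrow> real"
  assumes "\<And>j. \<Gamma> j \<noteq> 0"
  shows "\<forall>f \<in> {ham \<Gamma> :: ('m::finite, 'n) phase \<Rightarrow> real} \<union> range (Fplus \<Gamma>) \<union> range (QPsq \<Gamma>).
         \<forall>g \<in> {ham \<Gamma> :: ('m, 'n) phase \<Rightarrow> real} \<union> range (Fplus \<Gamma>) \<union> range (QPsq \<Gamma>).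
         \<forall>z \<in> noncoll. pbracket \<Gamma> f g z = 0"
proof (intro ballI)
  fix f g :: "('m, 'n) phase \<Rightarrow> real" and z :: "('m, 'n) phase"
  assume f: "f \<in> {ham \<Gamma>} \<union> range (Fplus \<Gamma>) \<union> range (QPsq \<Gamma>)"
    and g: "g \<in> {ham \<Gamma>} \<union> range (Fplus \<Gamma>) \<union> range (QPsq \<Gamma>)"
    and z: "z \<in> noncoll"
  have bracket_with_Fplus_QPsq: "pbracket \<Gamma> f' g' z = 0"
    if f': "f' \<in> {ham \<Gamma>} \<union> range (Fplus \<Gamma>) \<union> range (QPsq \<Gamma>)"
      and g': "g' \<in> range (Fplus \<Gamma>) \<union> range (QPsq \<Gamma>)" for f' g'
  proof -
    obtain D where D: "(f' has_derivative D) (at z)"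
      and "\<And>b. D (rot_field b z) = 0" "\<And>b. D (transl_field \<Gamma> b z) = 0"
      using first_integral_derivative_invariant[OF f' z] by blast
    with g' show ?thesis
      using pbracket_Fplus[OF assms D] pbracket_QPsq[OF assms D] by auto
  qed
  show "pbracket \<Gamma> f g z = 0"
  proof (cases "g = ham \<Gamma>")
    case True
    then show ?thesis
      using f g bracket_with_Fplus_QPsq[of g f] pbracket_antisym[of \<Gamma> f g z] by auto
  qed (use f g bracket_with_Fplus_QPsq in blast)
qed

end
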